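(* Let $f:\mathbb{R}^d\to\mathbb{R}^d$ be a homeomorphism with the forward topological shadowing property. Then $f$ satisfies the topological shadowing property.
   Context: $\mathbb{R}^d$ carries the Euclidean metric $d$; $\mathcal{C}^+=\{\epsilon:\mathbb{R}^d\to\mathbb{R}^+ : \epsilon \text{ continuous}\}$. For $\delta\in\mathcal{C}^+$, a sequence $\{x_n\}_{n\in\mathbb{Z}}$ is a $\delta$-pseudo-orbit of $f$ if $d(f(x_n),x_{n+1})<\delta(f(x_n))$ for every $n\in\mathbb{Z}$. The homeomorphism $f$ satisfies the topological shadowing property if for every $\epsilon\in\mathcal{C}^+$ there exists $\delta\in\mathcal{C}^+$ such that for every $\delta$-pseudo-orbit $\{x_n\}$ there is $y$ with $d(f^n(y),x_n)<\epsilon(x_n)$ for all $n\in\mathbb{Z}$. The homeomorphism $f$ satisfies the forward topological shadowing property if for every $\epsilon\in\mathcal{C}^+$ there exists $\delta\in\mathcal{C}^+$ such that for every $\delta$-pseudo-orbit $\{x_n\}_{n\in\mathbb{Z}}$ there exists $y\in\mathbb{R}^d$ with $d(f^n(y),x_n)\le\epsilon(x_n)$ for all $n\ge 0$. *)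

theory Defs
  imports "HOL-Analysis.Analysis"
begin

definition pos_cont :: "(real^'d \<Rightarrow> real) \<Rightarrow> bool" where
  "pos_cont e \<longleftrightarrow> continuous_on UNIV e \<and> (\<forall>x. e x > 0)"

definition iter_int :: "('a \<Rightarrow> 'a) \<Rightarrow> int \<Rightarrow> 'a \<Rightarrow> 'a" where
  "iter_int f n = (if 0 \<le> n then f ^^ nat n else inv f ^^ nat (- n))"

definition pseudo_orbit :: "(real^'d \<Rightarrow> real^'d) \<Rightarrow> (real^'d \<Rightarrow> real) \<Rightarrow> (int \<Rightarrow> real^'d) \<Rightarrow> bool" where
  "pseudo_orbit f \<delta> xs \<longleftrightarrow> (\<forall>n. dist (f (xs n)) (xs (n + 1)) < \<delta> (f (xs n)))"

definition topological_shadowing :: "(real^'d \<Rightarrow> real^'d) \<Rightarrow> bool" where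
  "topological_shadowing f \<longleftrightarrow>
     (\<forall>\<epsilon>. pos_cont \<epsilon> \<longrightarrow> (\<exists>\<delta>. pos_cont \<delta> \<and>
        (\<forall>xs. pseudo_orbit f \<delta> xs \<longrightarrow>
           (\<exists>y. \<forall>n::int. dist (iter_int f n y) (xs n) < \<epsilon> (xs n)))))"

definition forward_topological_shadowing :: "(real^'d \<Rightarrow> real^'d) \<Rightarrow> bool" where
  "forward_topological_shadowing f \<longleftrightarrow>
     (\<forall>\<epsilon>. pos_cont \<epsilon> \<longrightarrow> (\<exists>\<delta>. pos_cont \<delta> \<and>
        (\<forall>xs. pseudo_orbit f \<delta> xs \<longrightarrow>
           (\<exists>y. \<forall>n::int. n \<ge> 0 \<longrightarrow> dist (iter_int f n y) (xs n) \<le> \<epsilon> (xs n)))))"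

end

theory Submission
  imports Defs
begin

text \<open>Given a pseudo-orbit, forward shadowing of its shifts by -k yields points shadowing it from
  time -k on. All these points lie in a fixed closed ball around the zeroth term, so a subsequence
  converges; since every iterate of the homeomorphism is continuous, the limit shadows the whole
  pseudo-orbit with the non-strict bound, and halving the tolerance makes the bound strict.\<close>

lemma iter_int_eq:
  assumes gf: "\<And>x. g (f x) = x" and fg: "\<And>y. f (g y) = y"
  shows "iter_int f n = (if 0 \<le> n then f ^^ nat n else g ^^ nat (- n))"
proof -
  have "inv f = g" using gf fg by (rule inv_equality)
  then show ?thesis unfolding iter_int_def by simp
qed

lemma iter_int_plus_one:
  assumes gf: "\<And>x. g (f x) = x" and fg: "\<And>y. f (g y) = y"
  shows "iter_int f (n + 1) x = f (iter_int f n x)"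
proof (cases "0 \<le> n")
  case True
  then have "nat (n + 1) = Suc (nat n)" by simp
  with True show ?thesis by (simp add: iter_int_eq[OF gf fg])
next
  case False
  then obtain j where j: "n = - int (Suc j)"
    by (intro that[of "nat (- n - 1)"]) simp
  then have "nat (- (n + 1)) = j" and "nat (- n) = Suc j" by simp_all
  with j fg show ?thesis by (simp add: iter_int_eq[OF gf fg])
qed

lemma iter_int_minus_one:
  assumes gf: "\<And>x. g (f x) = x" and fg: "\<And>y. f (g y) = y"
  shows "iter_int f (n - 1) x = g (iter_int f n x)"
  using iter_int_plus_one[OF gf fg, of "n - 1" x] gf by simp

lemma iter_int_add:
  assumes gf: "\<And>x. g (f x) = x" and fg: "\<And>y. f (g y) = y"
  shows "iter_int f m (iter_int f n x) = iter_int f (m + n) x"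
proof (induction m rule: int_induct[where k = 0])
  case base
  then show ?case by (simp add: iter_int_eq[OF gf fg])
next
  case (step1 i)
  then show ?case
    using iter_int_plus_one[OF gf fg, of i] iter_int_plus_one[OF gf fg, of "i + n"]
    by (simp add: algebra_simps)
next
  case (step2 i)
  then show ?case
    using iter_int_minus_one[OF gf fg, of i] iter_int_minus_one[OF gf fg, of "i + n"]
    by (simp add: algebra_simps)
qed

lemma continuous_on_funpow:
  fixes h :: "'a::topological_space \<Rightarrow> 'a"
  assumes "continuous_on UNIV h"
  shows "continuous_on UNIV (h ^^ n)"
proof (induction n)
  case 0
  then show ?case by (simp add: continuous_on_id')
next
  case (Suc n)
  then show ?case
    using continuous_on_compose[OF Suc.IH continuous_on_subset[OF assms subset_UNIV]]
    by (simp only: funpow.simps)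
qed

lemma continuous_on_iter_int:
  assumes "homeomorphism UNIV UNIV f g"
  shows "continuous_on UNIV (iter_int f n)"
proof -
  have gf: "\<And>x. g (f x) = x" and fg: "\<And>y. f (g y) = y"
    and "continuous_on UNIV f" "continuous_on UNIV g"
    using assms unfolding homeomorphism_def by auto
  then show ?thesis
    by (simp add: iter_int_eq[OF gf fg] continuous_on_funpow)
qed

lemma pseudo_orbit_shift:
  assumes "pseudo_orbit f \<delta> xs"
  shows "pseudo_orbit f \<delta> (\<lambda>n. xs (n + k))"
  using assms unfolding pseudo_orbit_def by (metis add.commute add.left_commute)

lemma shadow_from_half_line_shadows:
  fixes f g :: "'a::heine_borel \<Rightarrow> 'a" and xs :: "int \<Rightarrow> 'a"
  assumes hom: "homeomorphism UNIV UNIV f g"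
    and half: "\<And>k::nat. \<exists>z. \<forall>m. - int k \<le> m \<longrightarrow> dist (iter_int f m z) (xs m) \<le> e m"
  shows "\<exists>y. \<forall>m. dist (iter_int f m y) (xs m) \<le> e m"
proof -
  have gf: "\<And>x. g (f x) = x" and fg: "\<And>y. f (g y) = y"
    using hom unfolding homeomorphism_def by auto
  obtain Z where Z: "\<And>k m. - int k \<le> m \<Longrightarrow> dist (iter_int f m (Z k)) (xs m) \<le> e m"
    using half by metis
  have "Z k \<in> cball (xs 0) (e 0)" for k
    using Z[of k 0] by (simp add: iter_int_eq[OF gf fg] dist_commute)
  then obtain l r where r: "strict_mono r" and lim: "(Z \<circ> r) \<longlonglongrightarrow> l"
    using compact_cball unfolding compact_def seq_compact_def by metis
  have "dist (iter_int f m l) (xs m) \<le> e m" for m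
  proof (rule LIMSEQ_le_const2)
    show "(\<lambda>n. dist (iter_int f m ((Z \<circ> r) n)) (xs m)) \<longlonglongrightarrow> dist (iter_int f m l) (xs m)"
      using continuous_on_tendsto_compose[OF continuous_on_iter_int[OF hom] lim]
      by (intro tendsto_intros) simp_all
    show "\<exists>N. \<forall>n\<ge>N. dist (iter_int f m ((Z \<circ> r) n)) (xs m) \<le> e m"
    proof (intro exI allI impI)
      fix n assume "nat (- m) \<le> n"
      moreover have "n \<le> r n" using r by (simp add: strict_mono_imp_increasing)
      ultimately have "- int (r n) \<le> m" by linarith
      then show "dist (iter_int f m ((Z \<circ> r) n)) (xs m) \<le> e m" by (simp add: Z)
    qed
  qed
  then show ?thesis by blast
qed

theorem mainTheorem6:
  fixes f g :: "real^'d \<Rightarrow> real^'d"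
  assumes "homeomorphism UNIV UNIV f g"
    and "forward_topological_shadowing f"
  shows "topological_shadowing f"
  unfolding topological_shadowing_def
proof (intro allI impI)
  have gf: "\<And>x. g (f x) = x" and fg: "\<And>y. f (g y) = y"
    using assms(1) unfolding homeomorphism_def by auto
  fix \<epsilon> :: "real^'d \<Rightarrow> real" assume pos: "pos_cont \<epsilon>"
  then have "pos_cont (\<lambda>x. \<epsilon> x / 2)" unfolding pos_cont_def by (auto intro: continuous_intros)
  then obtain \<delta> where "pos_cont \<delta>" and forward: "\<And>xs. pseudo_orbit f \<delta> xs \<Longrightarrow>
      \<exists>y. \<forall>n::int. n \<ge> 0 \<longrightarrow> dist (iter_int f n y) (xs n) \<le> \<epsilon> (xs n) / 2"
    using assms(2) unfolding forward_topological_shadowing_def by blast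
  moreover have "\<exists>y. \<forall>n. dist (iter_int f n y) (xs n) < \<epsilon> (xs n)" if po: "pseudo_orbit f \<delta> xs" for xs
  proof -
    have "\<exists>z. \<forall>m. - int k \<le> m \<longrightarrow> dist (iter_int f m z) (xs m) \<le> \<epsilon> (xs m) / 2" for k :: nat
    proof -
      obtain y where y: "\<And>n. n \<ge> 0 \<Longrightarrow> dist (iter_int f n y) (xs (n - int k)) \<le> \<epsilon> (xs (n - int k)) / 2"
        using forward[OF pseudo_orbit_shift[OF po, of "- int k"]] by auto
      show ?thesis
        by (rule exI[of _ "iter_int f (int k) y"])
          (use y[of "_ + int k"] in \<open>simp add: iter_int_add[OF gf fg]\<close>)
    qed
    then obtain y where y: "\<And>n. dist (iter_int f n y) (xs n) \<le> \<epsilon> (xs n) / 2"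
      using shadow_from_half_line_shadows[OF assms(1), where e = "\<lambda>m. \<epsilon> (xs m) / 2"] by blast
    have "dist (iter_int f n y) (xs n) < \<epsilon> (xs n)" for n
    proof -
      have "\<epsilon> (xs n) > 0" using pos unfolding pos_cont_def by auto
      with y[of n] show ?thesis by linarith
    qed
    then show ?thesis by blast
  qed
  ultimately show "\<exists>\<delta>. pos_cont \<delta> \<and> (\<forall>xs. pseudo_orbit f \<delta> xs \<longrightarrow>
      (\<exists>y. \<forall>n::int. dist (iter_int f n y) (xs n) < \<epsilon> (xs n)))" by blast
qed

end
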